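(* Every finite nonempty set $A\subseteq S'(n,l)$ has a minimal set of generators; that is, there is a set of generators $G_0$ of $A$ such that $G_0\subseteq G$ for every set of generators $G$ of $A$ (equivalently, the intersection of all sets of generators of $A$ is itself a set of generators of $A$).
   Context: $\mathbb N_n=\{1,\dots,n\}$. $F_n$ denotes the set of functions $f:\mathbb N_n\to[0,1]$ with $\sum_{i=1}^n f(i)=1$. A generalized string of length $l$ over $\mathbb N_n$ is a function $s:\mathbb N_l\to F_n$; the set of these is $S'(n,l)$, and the value of $s$ at $i$ is written $s[i]$. The generalized Hamming distance is $d_{GH}(s,t)=\sum_{i=1}^l\big(1-\sum_{j=1}^n\min\{s[i](j),t[i](j)\}\big)$. For a finite nonempty $\sigma\subseteq S'(n,l)$, its radius is $r(\sigma)=\min\{r\ge0:\exists x\in S'(n,l)\,\forall y\in\sigma\ d_{GH}(x,y)\le r\}$ (this minimum exists), and a center of $\sigma$ is any $c\in S'(n,l)$ with $d_{GH}(c,y)\le r(\sigma)$ for all $y\in\sigma$. For $x\in S'(n,l)$, $r\ge0$: $B(x,r)=\{y:d_{GH}(x,y)\le r\}$, ${\rm int}B(x,r)=\{y:d_{GH}(x,y)<r\}$, ${\rm bd}B(x,r)=\{y:d_{GH}(x,y)=r\}$. $MB(\sigma)=\{B(c,r(\sigma)):c\text{ is a center of }\sigma\}$. For a finite nonempty $A\subseteq S'(n,l)$, a set $G\subseteq A$ is a set of generators of $A$ if there is $B\in MB(A)$ with $G\subseteq{\rm bd}B$ and $A\setminus G\subseteq{\rm int}B$. *)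

theory Defs
  imports "HOL-Analysis.Analysis"
begin

text \<open>F_n: probability vectors on {1..n}, represented extensionally (value 0 off {1..n}).\<close>
definition Fn :: "nat \<Rightarrow> (nat \<Rightarrow> real) set" where
  "Fn n = {f. (\<forall>j\<in>{1..n}. 0 \<le> f j \<and> f j \<le> 1) \<and> (\<Sum>j=1..n. f j) = 1
              \<and> (\<forall>j. j \<notin> {1..n} \<longrightarrow> f j = 0)}"

text \<open>S'(n,l): generalized strings s : {1..l} -> F_n, represented extensionally
  (s i = constant 0 off {1..l}).\<close>
definition gstrings :: "nat \<Rightarrow> nat \<Rightarrow> (nat \<Rightarrow> nat \<Rightarrow> real) set" where
  "gstrings n l = {s. (\<forall>i\<in>{1..l}. s i \<in> Fn n) \<and> (\<forall>i. i \<notin> {1..l} \<longrightarrow> s i = (\<lambda>_. 0))}"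

definition dGH :: "nat \<Rightarrow> nat \<Rightarrow> (nat \<Rightarrow> nat \<Rightarrow> real) \<Rightarrow> (nat \<Rightarrow> nat \<Rightarrow> real) \<Rightarrow> real" where
  "dGH n l s t = (\<Sum>i=1..l. 1 - (\<Sum>j=1..n. min (s i j) (t i j)))"

definition radius :: "nat \<Rightarrow> nat \<Rightarrow> (nat \<Rightarrow> nat \<Rightarrow> real) set \<Rightarrow> real" where
  "radius n l \<sigma> = (LEAST r. r \<ge> 0 \<and> (\<exists>x\<in>gstrings n l. \<forall>y\<in>\<sigma>. dGH n l x y \<le> r))"

definition is_center :: "nat \<Rightarrow> nat \<Rightarrow> (nat \<Rightarrow> nat \<Rightarrow> real) set \<Rightarrow> (nat \<Rightarrow> nat \<Rightarrow> real) \<Rightarrow> bool" where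
  "is_center n l \<sigma> c \<longleftrightarrow> c \<in> gstrings n l \<and> (\<forall>y\<in>\<sigma>. dGH n l c y \<le> radius n l \<sigma>)"

definition gball :: "nat \<Rightarrow> nat \<Rightarrow> (nat \<Rightarrow> nat \<Rightarrow> real) \<Rightarrow> real \<Rightarrow> (nat \<Rightarrow> nat \<Rightarrow> real) set" where
  "gball n l x r = {y\<in>gstrings n l. dGH n l x y \<le> r}"

definition gint :: "nat \<Rightarrow> nat \<Rightarrow> (nat \<Rightarrow> nat \<Rightarrow> real) \<Rightarrow> real \<Rightarrow> (nat \<Rightarrow> nat \<Rightarrow> real) set" where
  "gint n l x r = {y\<in>gstrings n l. dGH n l x y < r}"

definition gbd :: "nat \<Rightarrow> nat \<Rightarrow> (nat \<Rightarrow> nat \<Rightarrow> real) \<Rightarrow> real \<Rightarrow> (nat \<Rightarrow> nat \<Rightarrow> real) set" where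
  "gbd n l x r = {y\<in>gstrings n l. dGH n l x y = r}"

text \<open>MB(\<sigma>), with each ball recorded by its center and radius so that int and bd are determined.\<close>
definition MB :: "nat \<Rightarrow> nat \<Rightarrow> (nat \<Rightarrow> nat \<Rightarrow> real) set \<Rightarrow> ((nat \<Rightarrow> nat \<Rightarrow> real) \<times> real) set" where
  "MB n l \<sigma> = {(c, radius n l \<sigma>) | c. is_center n l \<sigma> c}"

definition is_generators :: "nat \<Rightarrow> nat \<Rightarrow> (nat \<Rightarrow> nat \<Rightarrow> real) set \<Rightarrow> (nat \<Rightarrow> nat \<Rightarrow> real) set \<Rightarrow> bool" where
  "is_generators n l A G \<longleftrightarrow> G \<subseteq> A \<and>
     (\<exists>(c, r)\<in>MB n l A. G \<subseteq> gbd n l c r \<and> A - G \<subseteq> gint n l c r)"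

end

theory Submission
  imports Defs
begin

(* Centres exist because S'(n,l) is compact, and they form a convex set because d_GH is convex
   in its first argument. A set of generators is exactly the set of points of A at distance r(A)
   from some centre. A point at distance r(A) from a proper convex combination of two centres is
   at distance r(A) from both, since it is at distance at most r(A) from each; so any two sets of
   generators contain a third, and the finite family of sets of generators has a least element. *)

lemma closed_Fn: "closed (Fn n)"
  unfolding Fn_def Ball_def
  by (intro closed_Collect_conj closed_Collect_all closed_Collect_imp open_Collect_const
      closed_Collect_le closed_Collect_eq continuous_intros continuous_on_product_coordinates)

lemma closed_gstrings: "closed (gstrings n l)"
proof -
  have "closed {s :: nat \<Rightarrow> nat \<Rightarrow> real. s i \<in> Fn n}" for i
    using closed_vimage[OF closed_Fn continuous_on_product_coordinates] by (simp add: vimage_def)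
  then show ?thesis
    unfolding gstrings_def Ball_def
    by (intro closed_Collect_conj closed_Collect_all closed_Collect_imp open_Collect_const
        closed_Collect_eq continuous_intros continuous_on_product_coordinates)
qed

lemma gstrings_entry_bounds:
  assumes "s \<in> gstrings n l"
  shows "0 \<le> s i j" and "s i j \<le> 1"
  using assms unfolding gstrings_def Fn_def
  by (cases "i \<in> {1..l}"; cases "j \<in> {1..n}"; force)+

lemma gstrings_row_sum:
  assumes "s \<in> gstrings n l" "i \<in> {1..l}"
  shows "(\<Sum>j=1..n. s i j) = 1"
  using assms unfolding gstrings_def Fn_def by blast

lemma gstrings_outside:
  assumes "s \<in> gstrings n l" "i \<notin> {1..l} \<or> j \<notin> {1..n}"
  shows "s i j = 0"
  using assms unfolding gstrings_def Fn_def by (cases "i \<in> {1..l}") auto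

lemma compact_PiE_UNIV:
  assumes "\<And>i. compact (S i)"
  shows "compact (\<Pi>\<^sub>E i\<in>UNIV. S i)"
  using compactin_PiE[of "\<lambda>_. euclidean" UNIV S] assms by (simp add: euclidean_product_topology)

lemma compact_gstrings: "compact (gstrings n l)"
proof -
  have box: "compact (\<Pi>\<^sub>E (i::nat)\<in>UNIV. \<Pi>\<^sub>E (j::nat)\<in>UNIV. {0..1::real})"
    by (intro compact_PiE_UNIV compact_Icc)
  have sub: "gstrings n l \<subseteq> (\<Pi>\<^sub>E (i::nat)\<in>UNIV. \<Pi>\<^sub>E (j::nat)\<in>UNIV. {0..1::real})"
    using gstrings_entry_bounds by (auto simp: PiE_UNIV_domain)
  show ?thesis
    using compact_Int_closed[OF box closed_gstrings[of n l]] unfolding Int_absorb1[OF sub] .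
qed

lemma continuous_on_Max:
  fixes f :: "'i \<Rightarrow> 'a::topological_space \<Rightarrow> 'b::linorder_topology"
  assumes "finite I" "I \<noteq> {}" "\<And>i. i \<in> I \<Longrightarrow> continuous_on S (f i)"
  shows "continuous_on S (\<lambda>x. Max ((\<lambda>i. f i x) ` I))"
  using assms
proof (induction I rule: finite_ne_induct)
  case (singleton i)
  then show ?case by simp
next
  case (insert i I)
  then show ?case by (simp add: continuous_on_max)
qed

lemma continuous_on_entry: "continuous_on S (\<lambda>s :: 'a \<Rightarrow> 'b \<Rightarrow> 'c::topological_space. s i j)"
proof -
  have "continuous_on UNIV (\<lambda>s :: 'a \<Rightarrow> 'b \<Rightarrow> 'c. s i j)"
    by (rule continuous_on_product_then_coordinatewise) simp
  then show ?thesis by (rule continuous_on_subset) simp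
qed

lemma continuous_on_dGH: "continuous_on S (\<lambda>x. dGH n l x y)"
  unfolding dGH_def
  by (intro continuous_on_sum continuous_on_diff continuous_on_min continuous_on_const
      continuous_on_entry)

lemma dGH_nonneg:
  assumes "y \<in> gstrings n l"
  shows "0 \<le> dGH n l x y"
  unfolding dGH_def
proof (rule sum_nonneg)
  fix i assume "i \<in> {1..l}"
  have "(\<Sum>j=1..n. min (x i j) (y i j)) \<le> (\<Sum>j=1..n. y i j)"
    by (rule sum_mono) simp
  also have "\<dots> = 1"
    using assms \<open>i \<in> {1..l}\<close> by (rule gstrings_row_sum)
  finally show "0 \<le> 1 - (\<Sum>j=1..n. min (x i j) (y i j))" by simp
qed

lemma center_exists:
  assumes "finite A" "A \<noteq> {}" "A \<subseteq> gstrings n l"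
  obtains c where "is_center n l A c"
proof -
  define f where "f x = Max ((\<lambda>y. dGH n l x y) ` A)" for x
  have "continuous_on (gstrings n l) f"
    unfolding f_def using assms(1,2) by (intro continuous_on_Max continuous_on_dGH)
  moreover have "gstrings n l \<noteq> {}" using assms(2,3) by blast
  ultimately obtain c where c: "c \<in> gstrings n l" "\<And>x. x \<in> gstrings n l \<Longrightarrow> f c \<le> f x"
    using continuous_attains_inf[OF compact_gstrings] by blast
  have f_bound: "f x \<le> r \<longleftrightarrow> (\<forall>y\<in>A. dGH n l x y \<le> r)" for x r
    unfolding f_def using assms(1,2) by simp
  obtain y where "y \<in> A" using assms(2) by blast
  then have "dGH n l c y \<le> f c" and "0 \<le> dGH n l c y"
    using f_bound[of c "f c"] dGH_nonneg assms(3) by auto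
  then have "0 \<le> f c" by linarith
  have "radius n l A = f c"
    unfolding radius_def
  proof (rule Least_equality)
    show "0 \<le> f c \<and> (\<exists>x\<in>gstrings n l. \<forall>y\<in>A. dGH n l x y \<le> f c)"
      using \<open>0 \<le> f c\<close> c(1) f_bound by blast
    fix r assume "0 \<le> r \<and> (\<exists>x\<in>gstrings n l. \<forall>y\<in>A. dGH n l x y \<le> r)"
    then obtain x where "x \<in> gstrings n l" "f x \<le> r" using f_bound by blast
    with c(2) show "f c \<le> r" by fastforce
  qed
  then have "is_center n l A c"
    unfolding is_center_def using c(1) f_bound[of c "f c"] by simp
  then show thesis ..
qed

lemma gstrings_convex:
  assumes "a \<in> gstrings n l" "b \<in> gstrings n l" "0 \<le> u" "0 \<le> v" "u + v = 1"
  shows "(\<lambda>i j. u * a i j + v * b i j) \<in> gstrings n l"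
proof -
  have bounds: "0 \<le> u * a i j + v * b i j \<and> u * a i j + v * b i j \<le> 1" for i j
  proof -
    have "u * a i j \<le> u" "v * b i j \<le> v"
      using assms gstrings_entry_bounds by (simp_all add: mult_left_le)
    then show ?thesis using assms gstrings_entry_bounds by simp
  qed
  have "(\<Sum>j=1..n. u * a i j + v * b i j) = 1" if "i \<in> {1..l}" for i
  proof -
    have "(\<Sum>j=1..n. u * a i j + v * b i j) = u * (\<Sum>j=1..n. a i j) + v * (\<Sum>j=1..n. b i j)"
      by (simp add: sum.distrib sum_distrib_left)
    then show ?thesis
      using gstrings_row_sum[OF assms(1) that] gstrings_row_sum[OF assms(2) that] assms(5) by simp
  qed
  then show ?thesis
    using assms bounds gstrings_outside unfolding gstrings_def[of n l] Fn_def by auto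
qed

lemma dGH_convex_left:
  assumes "0 \<le> u" "0 \<le> v" "u + v = 1"
  shows "dGH n l (\<lambda>i j. u * a i j + v * b i j) y \<le> u * dGH n l a y + v * dGH n l b y"
proof -
  have min_comb: "u * min (a i j) (y i j) + v * min (b i j) (y i j)
      \<le> min (u * a i j + v * b i j) (y i j)" for i j
  proof -
    have "u * min (a i j) (y i j) \<le> u * a i j" "u * min (a i j) (y i j) \<le> u * y i j"
      "v * min (b i j) (y i j) \<le> v * b i j" "v * min (b i j) (y i j) \<le> v * y i j"
      using assms by (simp_all add: mult_left_mono)
    moreover have "u * y i j + v * y i j = y i j"
      using assms(3) by (simp flip: distrib_right)
    ultimately show ?thesis by linarith
  qed
  have row: "u * (1 - (\<Sum>j=1..n. min (a i j) (y i j))) + v * (1 - (\<Sum>j=1..n. min (b i j) (y i j)))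
      = 1 - (\<Sum>j=1..n. u * min (a i j) (y i j) + v * min (b i j) (y i j))" for i
    using assms(3) by (simp add: sum.distrib sum_distrib_left algebra_simps)
  have "u * dGH n l a y + v * dGH n l b y
      = (\<Sum>i=1..l. 1 - (\<Sum>j=1..n. u * min (a i j) (y i j) + v * min (b i j) (y i j)))"
    unfolding dGH_def by (simp only: sum_distrib_left row flip: sum.distrib)
  also have "\<dots> \<ge> dGH n l (\<lambda>i j. u * a i j + v * b i j) y"
    unfolding dGH_def by (intro sum_mono diff_left_mono min_comb)
  finally show ?thesis .
qed

lemma is_center_convex:
  assumes "is_center n l A c1" "is_center n l A c2" "0 \<le> u" "0 \<le> v" "u + v = 1"
  shows "is_center n l A (\<lambda>i j. u * c1 i j + v * c2 i j)"
  unfolding is_center_def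
proof (intro conjI ballI)
  show "(\<lambda>i j. u * c1 i j + v * c2 i j) \<in> gstrings n l"
    using assms gstrings_convex unfolding is_center_def by blast
  fix y assume "y \<in> A"
  have "dGH n l (\<lambda>i j. u * c1 i j + v * c2 i j) y \<le> u * dGH n l c1 y + v * dGH n l c2 y"
    using assms(3-5) by (rule dGH_convex_left)
  also have "\<dots> \<le> radius n l A"
    using assms \<open>y \<in> A\<close> unfolding is_center_def by (intro convex_bound_le) auto
  finally show "dGH n l (\<lambda>i j. u * c1 i j + v * c2 i j) y \<le> radius n l A" .
qed

definition farthest_points ::
  "nat \<Rightarrow> nat \<Rightarrow> (nat \<Rightarrow> nat \<Rightarrow> real) set \<Rightarrow> (nat \<Rightarrow> nat \<Rightarrow> real) \<Rightarrow> (nat \<Rightarrow> nat \<Rightarrow> real) set"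
  where "farthest_points n l A c = {y \<in> A. dGH n l c y = radius n l A}"

lemma is_generators_iff:
  assumes "A \<subseteq> gstrings n l"
  shows "is_generators n l A G \<longleftrightarrow> (\<exists>c. is_center n l A c \<and> G = farthest_points n l A c)"
proof
  assume "is_generators n l A G"
  then obtain c where c: "is_center n l A c" "G \<subseteq> A"
    "G \<subseteq> gbd n l c (radius n l A)" "A - G \<subseteq> gint n l c (radius n l A)"
    unfolding is_generators_def MB_def by blast
  then have "G = farthest_points n l A c"
    unfolding farthest_points_def gbd_def gint_def by fastforce
  with c(1) show "\<exists>c. is_center n l A c \<and> G = farthest_points n l A c" by blast
next
  assume "\<exists>c. is_center n l A c \<and> G = farthest_points n l A c"
  then obtain c where c: "is_center n l A c" "G = farthest_points n l A c" by blast
  then have "(c, radius n l A) \<in> MB n l A" unfolding MB_def by blast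
  moreover have "A - G \<subseteq> gint n l c (radius n l A)"
    using c assms unfolding is_center_def farthest_points_def gint_def by force
  moreover have "G \<subseteq> gbd n l c (radius n l A)"
    using c assms unfolding farthest_points_def gbd_def by force
  ultimately show "is_generators n l A G"
    unfolding is_generators_def using c(2) farthest_points_def by blast
qed

lemma farthest_points_convex_subset:
  assumes "is_center n l A c1" "is_center n l A c2" "0 < u" "0 < v" "u + v = 1"
  shows "farthest_points n l A (\<lambda>i j. u * c1 i j + v * c2 i j)
    \<subseteq> farthest_points n l A c1 \<inter> farthest_points n l A c2"
proof
  fix y assume y: "y \<in> farthest_points n l A (\<lambda>i j. u * c1 i j + v * c2 i j)"
  define r where "r = radius n l A"
  define d1 where "d1 = dGH n l c1 y"
  define d2 where "d2 = dGH n l c2 y"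
  have "y \<in> A" and "r \<le> u * d1 + v * d2"
    using y dGH_convex_left[of u v n l c1 c2 y] assms(3-5)
    unfolding farthest_points_def r_def d1_def d2_def by auto
  moreover have "d1 \<le> r" "d2 \<le> r"
    using assms(1,2) \<open>y \<in> A\<close> unfolding is_center_def r_def d1_def d2_def by auto
  moreover have "\<not> (d1 < r \<or> d2 < r)"
  proof
    assume "d1 < r \<or> d2 < r"
    then have "u * d1 < u * r \<or> v * d2 < v * r"
      using assms(3,4) by auto
    moreover have "u * d1 \<le> u * r" "v * d2 \<le> v * r"
      using \<open>d1 \<le> r\<close> \<open>d2 \<le> r\<close> assms(3,4) by simp_all
    moreover have "u * r + v * r = r"
      using assms(5) by (simp flip: distrib_right)
    ultimately show False
      using \<open>r \<le> u * d1 + v * d2\<close> by linarith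
  qed
  ultimately have "d1 = r" "d2 = r" by linarith+
  then show "y \<in> farthest_points n l A c1 \<inter> farthest_points n l A c2"
    using \<open>y \<in> A\<close> unfolding farthest_points_def r_def d1_def d2_def by simp
qed

lemma is_generators_Int:
  assumes "A \<subseteq> gstrings n l" "is_generators n l A G1" "is_generators n l A G2"
  shows "\<exists>G. is_generators n l A G \<and> G \<subseteq> G1 \<inter> G2"
proof -
  obtain c1 c2 where c: "is_center n l A c1" "is_center n l A c2"
    and G: "G1 = farthest_points n l A c1" "G2 = farthest_points n l A c2"
    using assms is_generators_iff by metis
  let ?c = "\<lambda>i j. 1/2 * c1 i j + 1/2 * c2 i j"
  have "is_center n l A ?c"
    by (rule is_center_convex[OF c]) simp_all
  then have "is_generators n l A (farthest_points n l A ?c)"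
    using is_generators_iff[OF assms(1)] by blast
  moreover have "farthest_points n l A ?c \<subseteq> G1 \<inter> G2"
    unfolding G by (rule farthest_points_convex_subset[OF c]) simp_all
  ultimately show ?thesis by blast
qed

lemma finite_directed_has_least:
  fixes F :: "'a::order set"
  assumes "finite F" "F \<noteq> {}" "\<And>x y. x \<in> F \<Longrightarrow> y \<in> F \<Longrightarrow> \<exists>z\<in>F. z \<le> x \<and> z \<le> y"
  shows "\<exists>m\<in>F. \<forall>y\<in>F. m \<le> y"
proof -
  obtain m where m: "m \<in> F" "\<forall>z\<in>F. z \<le> m \<longrightarrow> m = z"
    using finite_has_minimal[OF assms(1,2)] by blast
  have "m \<le> y" if "y \<in> F" for y
    using assms(3)[OF m(1) that] m(2) by force
  with m(1) show ?thesis by blast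
qed

theorem mainTheorem3:
  fixes n l :: nat and A :: "(nat \<Rightarrow> nat \<Rightarrow> real) set"
  assumes "finite A" and "A \<noteq> {}" and "A \<subseteq> gstrings n l"
  shows "\<exists>G0. is_generators n l A G0 \<and> (\<forall>G. is_generators n l A G \<longrightarrow> G0 \<subseteq> G)"
proof -
  define F where "F = {G. is_generators n l A G}"
  have "F \<subseteq> Pow A"
    unfolding F_def is_generators_def by blast
  then have "finite F"
    by (rule finite_subset) (simp add: assms(1))
  moreover obtain c where "is_center n l A c"
    using center_exists[OF assms] .
  then have "F \<noteq> {}"
    using is_generators_iff[OF assms(3)] unfolding F_def by blast
  moreover have "\<exists>G\<in>F. G \<subseteq> G1 \<and> G \<subseteq> G2" if "G1 \<in> F" "G2 \<in> F" for G1 G2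
    using is_generators_Int[OF assms(3), of G1 G2] that unfolding F_def by blast
  ultimately have "\<exists>G0\<in>F. \<forall>G\<in>F. G0 \<subseteq> G"
    by (rule finite_directed_has_least)
  then show ?thesis unfolding F_def by blast
qed

end
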